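(* For all $x, e \in \mathcal{P}$ we have $x \in \ell_e$ if and only if $e \in \ell_{x^{q/2}}$.
   Context: Let $q = 2^m$, let $E = \mathbb{F}_{q^4}$, and define $\mathcal{P} = \{x \in E \mid x^{q^3+q^2+q+1} = 1\}$. For $e \in \mathcal{P}$, let $$\ell_e = \{x \in \mathcal{P} \mid x^{q+1} + (e^{q^2+q+2} + e^{q+1})x + e^2 = 0\}.$$ *)

theory Defs
  imports Main
begin

text \<open>Here E is modelled as a finite field type 'a of cardinality q^4, q = 2^m.
  calP q is the set of x with x^(q^3+q^2+q+1) = 1, and ell q e is the line l_e.\<close>

definition calP :: "nat \<Rightarrow> 'a::field set" where
  "calP q = {x. x ^ (q^3 + q^2 + q + 1) = 1}"

definition ell :: "nat \<Rightarrow> 'a::field \<Rightarrow> 'a set" where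
  "ell q e = {x \<in> calP q. x ^ (q + 1) + (e ^ (q^2 + q + 2) + e ^ (q + 1)) * x + e ^ 2 = 0}"

end

theory Submission
  imports Defs "HOL-Computational_Algebra.Primes" "HOL-Number_Theory.Residues"
begin

text \<open>Write \<open>L(e, x)\<close> for the polynomial defining \<open>\<ell>\<^sub>e\<close> and \<open>y = x\<^bsup>q/2\<^esup>\<close>, so \<open>y\<^sup>2 = x\<^sup>q\<close>.
  Since the Frobenius map commutes with \<open>L\<close>, expanding and reducing with the norm relations
  \<open>x\<^bsup>1+q+q\<^sup>2+q\<^sup>3\<^esup> = e\<^bsup>1+q+q\<^sup>2+q\<^sup>3\<^esup> = 1\<close> gives the identity
  \<open>x L(y, e)\<^sup>2 = x\<^sup>q L(e, x) + e\<^sup>2 x L(e, x)\<^sup>q\<close> in characteristic 2.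
  Hence \<open>L(e, x) = 0\<close> forces \<open>L(y, e) = 0\<close>. Applying the same identity to the pair \<open>(y, e)\<close>,
  and noting \<open>L(e\<^bsup>q/2\<^esup>, y)\<^sup>2 = L(e, x)\<^sup>q\<close>, gives the converse.\<close>

definition ell_poly :: "nat \<Rightarrow> 'a::comm_semiring_1 \<Rightarrow> 'a \<Rightarrow> 'a" where
  "ell_poly q e x = x ^ (q + 1) + (e ^ (q^2 + q + 2) + e ^ (q + 1)) * x + e ^ 2"

lemma ell_altdef: "ell q e = {x \<in> calP q. ell_poly q e x = 0}"
  by (simp add: ell_def ell_poly_def)

lemma calP_nonzero: "x \<in> calP q \<Longrightarrow> x \<noteq> 0"
  by (auto simp: calP_def)

lemma power_calP:
  assumes "x \<in> calP q"
  shows "x ^ k \<in> calP q"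
proof -
  have "(x ^ k) ^ (q^3 + q^2 + q + 1) = (x ^ (q^3 + q^2 + q + 1)) ^ k"
    by (metis mult.commute power_mult)
  then show ?thesis
    using assms by (simp add: calP_def)
qed

lemma power_half_power_2_squared:
  "m \<ge> 1 \<Longrightarrow> (z ^ 2 ^ (m - 1)) ^ 2 = (z::'a::monoid_mult) ^ 2 ^ m"
  by (simp flip: power_mult power_Suc2)

lemma CHAR_eq_2_if_card_eq_power_of_2:
  assumes "card (UNIV :: 'a::{idom,finite} set) = 2 ^ k"
  shows "CHAR('a) = 2"
proof -
  have "prime CHAR('a)"
    by (simp add: finite_imp_CHAR_pos prime_CHAR_semidom)
  moreover have "CHAR('a) dvd 2 ^ k"
    using CHAR_dvd_CARD[where 'a = 'a] assms by simp
  ultimately have "CHAR('a) dvd 2"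
    using prime_dvd_power by blast
  with \<open>prime CHAR('a)\<close> show ?thesis
    by (simp add: primes_dvd_imp_eq)
qed

lemma ell_poly_power_CHAR_power:
  fixes e x :: "'a::comm_semiring_1"
  assumes "prime CHAR('a)" and "p = CHAR('a) ^ k"
  shows "ell_poly q e x ^ p = ell_poly q (e ^ p) (x ^ p)"
  unfolding ell_poly_def
  by (simp add: freshmans_dream'[OF assms] power_mult_distrib flip: power_mult)
     (simp add: mult.commute)

lemma norm_power_expand:
  fixes z :: "'a::comm_monoid_mult"
  shows "z ^ (q^3 + q^2 + q + 1) = z * z ^ q * z ^ q^2 * z ^ q^3"
    and "(z ^ q) ^ (q^2 + q + 2) = z ^ q^3 * z ^ q^2 * (z ^ q)^2"
    and "(z ^ q) ^ (q + 1) = z ^ q^2 * z ^ q"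
    and "z ^ (q^2 + q + 2) = z ^ q^2 * z ^ q * z^2"
    and "z ^ (q + 1) = z ^ q * z"
  by (simp_all add: power_add power2_eq_square power3_eq_cube mult_ac flip: power_mult)

text \<open>With \<open>X\<^sub>i = x\<^bsup>q\<^sup>i\<^esup>\<close> and \<open>A\<^sub>i = a\<^bsup>q\<^sup>i\<^esup>\<close> this is the identity below with all
  powers expanded; it holds up to a multiple of 2, which vanishes in characteristic 2.\<close>

lemma reduced_ell_identity:
  fixes x a X1 X2 X3 A1 A2 A3 :: "'a::comm_ring_1"
  assumes "x * X1 * X2 * X3 = 1" and "a * A1 * A2 * A3 = 1"
  shows "x * ((A1 * a)^2 + (X3 * X2 * X1^2 + X2 * X1) * a^2 + X1^2)
      + 2 * (x * X1 * A1 * a * (A2 * a + 1))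
    = X1 * (X1 * x + (A2 * A1 * a^2 + A1 * a) * x + a^2)
      + a^2 * x * (X2 * X1 + (A3 * A2 * A1^2 + A2 * A1) * X1 + A1^2)"
  (is "?lhs = ?rhs")
proof -
  have "?rhs - ?lhs = a * x * X1 * A1 * (a * A1 * A2 * A3 - 1) - X1 * a^2 * (x * X1 * X2 * X3 - 1)"
    by (simp add: algebra_simps power2_eq_square)
  then show ?thesis
    using assms by simp
qed

lemma ell_poly_squared_identity:
  fixes a x y :: "'a::field"
  assumes "CHAR('a) = 2" and "q = 2 ^ m" and "a \<in> calP q" and "x \<in> calP q"
    and "y ^ 2 = x ^ q"
  shows "x * ell_poly q y a ^ 2 = x ^ q * ell_poly q a x + a^2 * x * ell_poly q a x ^ q"
proof -
  have char: "prime CHAR('a)" "(2::'a) = 0"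
    using assms(1) of_nat_CHAR[where 'a = 'a] by auto
  have "ell_poly q y a ^ 2 = ell_poly q (x ^ q) (a ^ 2)"
    using ell_poly_power_CHAR_power[OF char(1), where p = 2 and k = 1] assms(1,5) by simp
  moreover have "ell_poly q a x ^ q = ell_poly q (a ^ q) (x ^ q)"
    using ell_poly_power_CHAR_power[OF char(1), of q m] assms(1,2) by simp
  moreover have "(a ^ 2) ^ (q + 1) = (a ^ q * a) ^ 2"
    by (simp add: power_mult_distrib flip: power_mult) (simp add: mult.commute)
  moreover have "x * ell_poly q (x ^ q) (a ^ 2) + 2 * (x * x^q * a^q * a * (a^q^2 * a + 1))
      = x ^ q * ell_poly q a x + a^2 * x * ell_poly q (a ^ q) (x ^ q)"
    using assms(4,3)
    unfolding calP_def mem_Collect_eq ell_poly_def norm_power_expand[of a q]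
      norm_power_expand[of x q] \<open>(a ^ 2) ^ (q + 1) = (a ^ q * a) ^ 2\<close>
    by (rule reduced_ell_identity)
  ultimately show ?thesis
    using char(2) by (simp add: power_mult_distrib flip: power_mult)
qed

lemma ell_poly_half_powers_squared:
  fixes e x :: "'a::comm_semiring_1"
  assumes "CHAR('a) = 2" and "m \<ge> 1"
  shows "ell_poly q (e ^ 2 ^ (m - 1)) (x ^ 2 ^ (m - 1)) ^ 2 = ell_poly q e x ^ 2 ^ m"
proof -
  have "ell_poly q (e ^ 2 ^ (m - 1)) (x ^ 2 ^ (m - 1)) ^ 2
      = ell_poly q ((e ^ 2 ^ (m - 1)) ^ 2) ((x ^ 2 ^ (m - 1)) ^ 2)"
    by (rule ell_poly_power_CHAR_power[where k = 1]) (simp_all add: assms(1))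
  also have "\<dots> = ell_poly q (e ^ 2 ^ m) (x ^ 2 ^ m)"
    by (simp only: power_half_power_2_squared[OF assms(2)])
  also have "\<dots> = ell_poly q e x ^ 2 ^ m"
    by (rule ell_poly_power_CHAR_power[where k = m, symmetric]) (simp_all add: assms(1))
  finally show ?thesis .
qed

lemma ell_poly_eq_0_iff_half_power:
  fixes e x :: "'a::field"
  assumes "CHAR('a) = 2" and "m \<ge> 1" and "e \<in> calP (2 ^ m)" and "x \<in> calP (2 ^ m)"
  shows "ell_poly (2 ^ m) e x = 0 \<longleftrightarrow> ell_poly (2 ^ m) (x ^ 2 ^ (m - 1)) e = 0"
proof -
  define q :: nat where "q = 2 ^ m"
  define y where "y = x ^ 2 ^ (m - 1)"
  have y_sq: "y ^ 2 = x ^ q" and e_half_sq: "(e ^ 2 ^ (m - 1)) ^ 2 = e ^ q"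
    using power_half_power_2_squared[OF assms(2)] by (simp_all add: q_def y_def)
  have "x * ell_poly q y e ^ 2 = x ^ q * ell_poly q e x + e^2 * x * ell_poly q e x ^ q"
    using ell_poly_squared_identity[OF assms(1) q_def assms(3,4)[folded q_def] y_sq] .
  moreover have "e * ell_poly q e x ^ q = e ^ q * ell_poly q y e + y^2 * e * ell_poly q y e ^ q"
  proof -
    have "y \<in> calP q" and "e \<in> calP q"
      using power_calP assms(3,4) by (simp_all add: q_def y_def)
    then have "e * ell_poly q (e ^ 2 ^ (m - 1)) y ^ 2
        = e ^ q * ell_poly q y e + y^2 * e * ell_poly q y e ^ q"
      by (rule ell_poly_squared_identity[OF assms(1) q_def _ _ e_half_sq])
    moreover have "ell_poly q (e ^ 2 ^ (m - 1)) y ^ 2 = ell_poly q e x ^ q"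
      using ell_poly_half_powers_squared[OF assms(1,2)] by (simp add: q_def y_def)
    ultimately show ?thesis
      by simp
  qed
  moreover have "q > 0" "x \<noteq> 0" "e \<noteq> 0"
    using assms(3,4) by (simp_all add: q_def calP_nonzero)
  ultimately have "ell_poly q e x = 0 \<longleftrightarrow> ell_poly q y e = 0"
    by (auto simp: power_0_left)
  then show ?thesis
    by (simp add: q_def y_def)
qed

theorem mainTheorem7:
  fixes m :: nat and x e :: "'a::{field,finite}"
  assumes "m \<ge> 1"
    and "card (UNIV :: 'a set) = (2 ^ m) ^ 4"
    and "x \<in> calP (2 ^ m)" and "e \<in> calP (2 ^ m)"
  shows "x \<in> ell (2 ^ m) e \<longleftrightarrow> e \<in> ell (2 ^ m) (x ^ (2 ^ (m - 1)))"
proof -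
  have "CHAR('a) = 2"
    using CHAR_eq_2_if_card_eq_power_of_2 assms(2) by (metis power_mult)
  then have "ell_poly (2 ^ m) e x = 0 \<longleftrightarrow> ell_poly (2 ^ m) (x ^ 2 ^ (m - 1)) e = 0"
    using ell_poly_eq_0_iff_half_power assms(1,3,4) by blast
  then show ?thesis
    using assms(3,4) by (simp add: ell_altdef)
qed

end
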